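(* Let $\Lambda=(\lambda_i)_{i=0}^\infty$ be a strictly increasing sequence of non-negative reals with $\lambda_0=0$ and $\sum_{i=1}^\infty 1/\lambda_i<\infty$, and let $M(\Lambda)=\overline{\operatorname{span}}\{t^{\lambda_i}: i\geq 0\}\subseteq C[0,1]$ with the sup-norm. Then $M(\Lambda)$ is not locally octahedral.
   Context: $C[0,1]$ is the space of real-valued continuous functions on $[0,1]$ with the sup-norm. A Banach space $X$ with unit sphere $S_X$ is locally octahedral if for every $x\in S_X$ and every $\varepsilon>0$ there exists $y\in S_X$ such that $\|x\pm y\|>2-\varepsilon$. *)

theory Defs
  imports "HOL-Analysis.Analysis"
begin

text \<open>Elements of C[0,1] are represented by functions real to real, continuous on [0,1];
  only their values on [0,1] matter.\<close>

definition sup_norm01 :: "(real \<Rightarrow> real) \<Rightarrow> real" where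
  "sup_norm01 f = (SUP t\<in>{0..1}. \<bar>f t\<bar>)"

text \<open>The power function t to the a on [0,1], with the convention t to the 0 equal to 1
  (note that 0 powr 0 = 0 in Isabelle, hence the case distinction).\<close>
definition mpow :: "real \<Rightarrow> real \<Rightarrow> real" where
  "mpow a t = (if a = 0 then 1 else t powr a)"

text \<open>Closure in C[0,1] (sup-norm) of the linear span of the functions t to the lam i.\<close>
definition muntz_space :: "(nat \<Rightarrow> real) \<Rightarrow> (real \<Rightarrow> real) set" where
  "muntz_space lam = {f. continuous_on {0..1} f \<and>
     (\<forall>e>0. \<exists>(n::nat) (c::nat \<Rightarrow> real).
        \<forall>t\<in>{0..1}. \<bar>f t - (\<Sum>i<n. c i * mpow (lam i) t)\<bar> < e)}"

definition locally_octahedral01 :: "(real \<Rightarrow> real) set \<Rightarrow> bool" where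
  "locally_octahedral01 X \<longleftrightarrow>
     (\<forall>x\<in>X. sup_norm01 x = 1 \<longrightarrow>
        (\<forall>\<epsilon>>0. \<exists>y\<in>X. sup_norm01 y = 1 \<and>
            sup_norm01 (\<lambda>t. x t + y t) > 2 - \<epsilon> \<and>
            sup_norm01 (\<lambda>t. x t - y t) > 2 - \<epsilon>))"

end

theory Submission
  imports Defs "HOL-Complex_Analysis.Complex_Analysis"
begin

text \<open>
  Let \<open>q s = (\<Sum>k\<in>F. a k * s powr lam k)\<close> be a Muntz polynomial with exponents
  \<open>lam k \<ge> l > 0\<close> and \<open>\<bar>q\<bar> \<le> m\<close> on \<open>[0, 1]\<close>. Its Mellin transform
  \<open>Q z = (\<Sum>k\<in>F. a k / (z + lam k + 1))\<close> is bounded by \<open>m\<close> on the imaginary axis. The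
  Blaschke product \<open>B z = (\<Prod>k\<in>F. (z + lam k + 1) / (z - lam k - 1))\<close> has modulus at most 1
  in the left half-plane, so the maximum principle gives \<open>\<bar>Q z * B z\<bar> \<le> m\<close> there, and as
  \<open>(\<Sum>k\<in>F. 1 / lam k) \<le> S\<close>, the factor \<open>1 / \<bar>B z\<bar>\<close> grows at most like \<open>exp (D * \<bar>Re z\<bar>)\<close>
  with \<open>D = 16 * (1 + 1/l) * S\<close> in a wedge around the negative real axis. Recovering \<open>q t\<close> as
  the contour integral of \<open>Q w * t powr (- w - 1) / (2 * pi * \<i>)\<close> over a triangle inside this
  wedge gives \<open>\<bar>q t\<bar> \<le> K * m * t powr (l/2)\<close> for small \<open>t\<close>, with \<open>K\<close> independent of \<open>q\<close>.
  By density, the unit ball of the Muntz space is equicontinuous at 0.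

  This rules out local octahedrality: \<open>x t = 1 - t powr lam 1\<close> has norm 1 and is close to 1
  only near 0, so a \<open>y\<close> of norm 1 with both \<open>x + y\<close> and \<open>x - y\<close> of norm close to 2 would be
  close to 1 at one point and close to \<open>-1\<close> at another, both near 0.
\<close>

section \<open>Mellin transforms of Muntz polynomials\<close>

lemma has_integral_of_real_powr_01:
  fixes z :: complex
  assumes "0 < Re z"
  shows "((\<lambda>s. of_real s powr (z - 1)) has_integral 1 / z) {0..1}"
proof -
  have "((\<lambda>s. of_real s powr (z - 1)) has_integral
      (of_real 1 powr z / z - of_real 0 powr z / z)) {0..1}"
    using assms
    by (intro fundamental_theorem_of_calculus_interior)
       (auto intro!: continuous_intros derivative_eq_intros has_vector_derivative_real_field)
  then show ?thesis by simp
qed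

definition muntz_poly ::
    "nat set \<Rightarrow> (nat \<Rightarrow> real) \<Rightarrow> (nat \<Rightarrow> real) \<Rightarrow> real \<Rightarrow> real" where
  "muntz_poly F lam a s = (\<Sum>k\<in>F. a k * s powr lam k)"

definition mellin_muntz_poly ::
    "nat set \<Rightarrow> (nat \<Rightarrow> real) \<Rightarrow> (nat \<Rightarrow> real) \<Rightarrow> complex \<Rightarrow> complex" where
  "mellin_muntz_poly F lam a z = (\<Sum>k\<in>F. of_real (a k) / (z + of_real (lam k + 1)))"

lemma has_integral_mellin_muntz_poly:
  assumes "finite F" and "\<And>k. k \<in> F \<Longrightarrow> 0 \<le> lam k" and "-1 < Re z"
  shows "((\<lambda>s. of_real (muntz_poly F lam a s) * of_real s powr z) has_integral
           mellin_muntz_poly F lam a z) {0..1}"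
proof -
  have "0 < Re (z + of_real (lam k + 1))" if "k \<in> F" for k
    using assms(2)[OF that] assms(3) by simp
  then have integral: "((\<lambda>s. \<Sum>k\<in>F. of_real (a k) * of_real s powr ((z + of_real (lam k + 1)) - 1))
      has_integral (\<Sum>k\<in>F. of_real (a k) * (1 / (z + of_real (lam k + 1))))) {0..1}"
    using assms(1) by (intro has_integral_sum has_integral_mult_right has_integral_of_real_powr_01)
  have "(\<Sum>k\<in>F. of_real (a k) * of_real s powr ((z + of_real (lam k + 1)) - 1))
      = of_real (muntz_poly F lam a s) * of_real s powr z" if "s \<in> {0..1}" for s
  proof -
    have "of_real s powr ((z + of_real (lam k + 1)) - 1) = of_real (s powr lam k) * of_real s powr z" for k
    proof -
      have "(z + of_real (lam k + 1)) - 1 = of_real (lam k) + z"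
        by simp
      then show ?thesis
        using that by (simp only: powr_add powr_of_real atLeastAtMost_iff)
    qed
    then show ?thesis
      unfolding muntz_poly_def by (simp add: sum_distrib_right mult.assoc)
  qed
  from has_integral_eq[OF this integral] show ?thesis
    unfolding mellin_muntz_poly_def by simp
qed

lemma norm_mellin_muntz_poly_imaginary_le:
  assumes "finite F" and "\<And>k. k \<in> F \<Longrightarrow> 0 \<le> lam k"
    and bound: "\<And>s. s \<in> {0..1} \<Longrightarrow> \<bar>muntz_poly F lam a s\<bar> \<le> m"
  shows "norm (mellin_muntz_poly F lam a (\<i> * of_real y)) \<le> m"
proof -
  have pointwise: "norm (of_real (muntz_poly F lam a s) * of_real s powr (\<i> * of_real y)) \<le> m"
    if "s \<in> {0..1} - {}" for s :: real
  proof -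
    have "norm (of_real s powr (\<i> * of_real y) :: complex) = s powr 0"
      using that by (subst norm_powr_real_powr) auto
    then have "norm (of_real s powr (\<i> * of_real y) :: complex) \<le> 1"
      by simp
    moreover have "\<bar>muntz_poly F lam a s\<bar> \<le> m"
      using bound that by simp
    ultimately show ?thesis
      unfolding norm_mult norm_of_real by (meson abs_ge_zero mult_left_le order_trans)
  qed
  have "0 \<le> m"
    using bound[of 0] by simp
  moreover have "((\<lambda>s. of_real (muntz_poly F lam a s) * of_real s powr (\<i> * of_real y)) has_integral
      mellin_muntz_poly F lam a (\<i> * of_real y)) {0..1}"
    using assms(1,2) by (rule has_integral_mellin_muntz_poly) auto
  ultimately have "norm (mellin_muntz_poly F lam a (\<i> * of_real y))
      \<le> m * Henstock_Kurzweil_Integration.content {0..1::real}"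
    using pointwise by (rule has_integral_bound_real[OF _ finite.emptyI])
  then show ?thesis
    by simp
qed

lemma norm_mellin_muntz_poly_le:
  assumes "finite F" and "0 < d" and "\<And>k. k \<in> F \<Longrightarrow> d \<le> norm (w + of_real (lam k + 1))"
  shows "norm (mellin_muntz_poly F lam a w) \<le> (\<Sum>k\<in>F. \<bar>a k\<bar>) / d"
proof -
  have "norm (mellin_muntz_poly F lam a w) \<le> (\<Sum>k\<in>F. norm (of_real (a k) / (w + of_real (lam k + 1))))"
    unfolding mellin_muntz_poly_def by (rule norm_sum)
  also have "\<dots> \<le> (\<Sum>k\<in>F. \<bar>a k\<bar> / d)"
  proof (rule sum_mono)
    fix k assume "k \<in> F"
    then have "d \<le> norm (w + of_real (lam k + 1))"
      by (rule assms(3))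
    moreover from this have "0 < norm (w + of_real (lam k + 1)) * d"
      using assms(2) by (meson mult_pos_pos less_le_trans)
    ultimately show "norm (of_real (a k) / (w + of_real (lam k + 1))) \<le> \<bar>a k\<bar> / d"
      unfolding norm_divide norm_of_real by (intro divide_left_mono) auto
  qed
  finally show ?thesis
    by (simp add: sum_divide_distrib)
qed

section \<open>A Blaschke product and the maximum principle\<close>

definition blaschke :: "nat set \<Rightarrow> (nat \<Rightarrow> real) \<Rightarrow> complex \<Rightarrow> complex" where
  "blaschke F lam z = (\<Prod>k\<in>F. (z + of_real (lam k + 1)) / (z - of_real (lam k + 1)))"

lemma norm_add_of_real_le_norm_diff:
  fixes z :: complex
  assumes "0 \<le> c" and "Re z \<le> 0"
  shows "norm (z + of_real c) \<le> norm (z - of_real c)"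
proof -
  have "(Re z + c)\<^sup>2 \<le> (Re z - c)\<^sup>2"
    using assms by (simp add: power2_eq_square algebra_simps mult_nonneg_nonpos)
  then show ?thesis
    unfolding cmod_def by simp
qed

lemma norm_blaschke_le_1:
  assumes "\<And>k. k \<in> F \<Longrightarrow> 0 \<le> lam k" and "Re z \<le> 0"
  shows "norm (blaschke F lam z) \<le> 1"
  unfolding blaschke_def prod_norm[symmetric]
proof (rule prod_le_1)
  fix k assume k: "k \<in> F"
  have "z - of_real (lam k + 1) \<noteq> 0"
    using assms(1)[OF k] assms(2) by (auto simp: complex_eq_iff)
  then show "0 \<le> norm ((z + of_real (lam k + 1)) / (z - of_real (lam k + 1))) \<and>
             norm ((z + of_real (lam k + 1)) / (z - of_real (lam k + 1))) \<le> 1"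
    using norm_add_of_real_le_norm_diff[of "lam k + 1" z] assms(1)[OF k] assms(2)
    by (simp add: norm_divide divide_le_eq_1)
qed

text \<open>The product \<open>mellin_muntz_poly F lam a z * blaschke F lam z\<close> with its removable
  singularities at \<open>-(lam k + 1)\<close> cancelled, hence holomorphic on \<open>Re z < 1\<close>.\<close>
definition mellin_times_blaschke ::
    "nat set \<Rightarrow> (nat \<Rightarrow> real) \<Rightarrow> (nat \<Rightarrow> real) \<Rightarrow> complex \<Rightarrow> complex" where
  "mellin_times_blaschke F lam a z =
     (\<Sum>k\<in>F. of_real (a k) * (\<Prod>j\<in>F-{k}. z + of_real (lam j + 1))) /
     (\<Prod>j\<in>F. z - of_real (lam j + 1))"

lemma mellin_times_blaschke_eq:
  assumes "finite F" and "\<And>k. k \<in> F \<Longrightarrow> z + of_real (lam k + 1) \<noteq> 0"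
  shows "mellin_times_blaschke F lam a z = mellin_muntz_poly F lam a z * blaschke F lam z"
proof -
  have "of_real (a k) / (z + of_real (lam k + 1)) * (\<Prod>j\<in>F. z + of_real (lam j + 1)) =
        of_real (a k) * (\<Prod>j\<in>F-{k}. z + of_real (lam j + 1))" if k: "k \<in> F" for k
    using prod.remove[OF assms(1) k, of "\<lambda>j. z + of_real (lam j + 1)"] assms(2)[OF k] by simp
  then have "mellin_muntz_poly F lam a z * (\<Prod>j\<in>F. z + of_real (lam j + 1)) =
        (\<Sum>k\<in>F. of_real (a k) * (\<Prod>j\<in>F-{k}. z + of_real (lam j + 1)))"
    unfolding mellin_muntz_poly_def sum_distrib_right by (rule sum.cong[OF refl])
  then show ?thesis
    unfolding mellin_times_blaschke_def blaschke_def prod_dividef times_divide_eq_right by simp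
qed

lemma holomorphic_mellin_times_blaschke:
  assumes "finite F" and "\<And>k. k \<in> F \<Longrightarrow> 0 \<le> lam k"
  shows "mellin_times_blaschke F lam a holomorphic_on {w. Re w < 1}"
proof -
  have "(\<Prod>j\<in>F. w - of_real (lam j + 1)) \<noteq> 0" if "Re w < 1" for w
  proof -
    have "w - of_real (lam j + 1) \<noteq> 0" if "j \<in> F" for j
      using assms(2)[OF that] \<open>Re w < 1\<close> by (auto simp: complex_eq_iff)
    then show ?thesis
      using assms(1) by (simp add: prod_zero_iff)
  qed
  then show ?thesis
    unfolding mellin_times_blaschke_def by (intro holomorphic_intros) auto
qed

lemma maximum_modulus_left_halfplane:
  fixes f :: "complex \<Rightarrow> complex"
  assumes holo: "f holomorphic_on {w. Re w < 0}" and cont: "continuous_on {w. Re w \<le> 0} f"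
    and imag: "\<And>y. norm (f (\<i> * of_real y)) \<le> m"
    and decay: "\<And>e. 0 < e \<Longrightarrow> \<exists>L. \<forall>w. Re w \<le> 0 \<longrightarrow> L \<le> norm w \<longrightarrow> norm (f w) \<le> e"
    and z: "Re z \<le> 0"
  shows "norm (f z) \<le> m"
proof (rule field_le_epsilon)
  fix e :: real assume "0 < e"
  then obtain L where L: "\<And>w. Re w \<le> 0 \<Longrightarrow> L \<le> norm w \<Longrightarrow> norm (f w) \<le> e"
    using decay by blast
  define R where "R = max L (norm z) + 1"
  define S where "S = cbox (Complex (-R) (-R)) (Complex 0 R)"
  have "0 \<le> m"
    using imag[of 0] norm_ge_zero order_trans by blast
  show "norm (f z) \<le> m + e"
  proof (rule maximum_modulus_frontier[where S = S and f = f and \<xi> = z])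
    show "f holomorphic_on interior S"
      by (rule holomorphic_on_subset[OF holo]) (auto simp: S_def in_box_complex_iff)
    show "continuous_on (closure S) f"
      by (rule continuous_on_subset[OF cont]) (auto simp: S_def in_cbox_complex_iff)
    show "bounded S"
      by (simp add: S_def)
    show "z \<in> S"
      using z abs_Re_le_cmod[of z] abs_Im_le_cmod[of z]
      by (auto simp: S_def R_def in_cbox_complex_iff)
  next
    fix w assume "w \<in> frontier S"
    then have w: "-R \<le> Re w" "Re w \<le> 0" "\<bar>Im w\<bar> \<le> R"
      and "Re w = 0 \<or> Re w = -R \<or> \<bar>Im w\<bar> = R"
      by (auto simp: S_def frontier_cbox in_cbox_complex_iff in_box_complex_iff)
    then consider "w = \<i> * of_real (Im w)" | "R \<le> \<bar>Re w\<bar> \<or> R \<le> \<bar>Im w\<bar>"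
      by (force simp: complex_eq_iff)
    then show "norm (f w) \<le> m + e"
    proof cases
      case 1
      then show ?thesis
        using imag[of "Im w"] \<open>0 < e\<close> by (metis add_increasing2 less_le)
    next
      case 2
      then have "L \<le> norm w"
        using abs_Re_le_cmod[of w] abs_Im_le_cmod[of w] by (auto simp: R_def)
      then show ?thesis
        using L[OF w(2)] \<open>0 \<le> m\<close> by simp
    qed
  qed
qed

lemma norm_mellin_times_blaschke_le_norm_mellin:
  assumes "finite F" and "\<And>k. k \<in> F \<Longrightarrow> 0 \<le> lam k"
    and "Re w \<le> 0" and "\<And>k. k \<in> F \<Longrightarrow> w + of_real (lam k + 1) \<noteq> 0"
  shows "norm (mellin_times_blaschke F lam a w) \<le> norm (mellin_muntz_poly F lam a w)"
  using mellin_times_blaschke_eq[OF assms(1,4)] norm_blaschke_le_1[OF assms(2,3)]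
  by (simp add: norm_mult mult_left_le)

lemma mellin_times_blaschke_vanishes_at_infinity:
  assumes fin: "finite F" and lam: "\<And>k. k \<in> F \<Longrightarrow> 0 \<le> lam k" and "0 < e"
  shows "\<exists>L. \<forall>w. Re w \<le> 0 \<longrightarrow> L \<le> norm w \<longrightarrow> norm (mellin_times_blaschke F lam a w) \<le> e"
proof -
  define A where "A = (\<Sum>k\<in>F. \<bar>a k\<bar>)"
  define C where "C = (\<Sum>k\<in>F. lam k + 1)"
  have "0 < A / e + 1"
    using \<open>0 < e\<close> by (simp add: A_def add_nonneg_pos sum_nonneg)
  have "lam k + 1 \<le> C" if "k \<in> F" for k
    unfolding C_def using fin lam that by (intro member_le_sum) auto
  moreover have "norm (of_real (lam k + 1) :: complex) = lam k + 1" if "k \<in> F" for k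
    using lam[OF that] by (simp del: of_real_add)
  ultimately have far: "A / e + 1 \<le> norm (w + of_real (lam k + 1))"
    if "C + A / e + 1 \<le> norm w" "k \<in> F" for w :: complex and k
    using that norm_diff_ineq[of w "of_real (lam k + 1)"] by fastforce
  have "norm (mellin_times_blaschke F lam a w) \<le> e" if w: "Re w \<le> 0" "C + A / e + 1 \<le> norm w" for w
  proof -
    have "w + of_real (lam k + 1) \<noteq> 0" if "k \<in> F" for k
      using far[OF w(2) that] \<open>0 < A / e + 1\<close> by auto
    from norm_mellin_times_blaschke_le_norm_mellin[OF fin lam w(1) this]
    have "norm (mellin_times_blaschke F lam a w) \<le> norm (mellin_muntz_poly F lam a w)" .
    also have "\<dots> \<le> A / (A / e + 1)"
      using norm_mellin_muntz_poly_le[OF fin \<open>0 < A / e + 1\<close> far[OF w(2)]] by (simp only: A_def)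
    also have "\<dots> \<le> e"
      using \<open>0 < A / e + 1\<close> \<open>0 < e\<close> by (simp add: field_simps)
    finally show ?thesis .
  qed
  then show ?thesis
    by blast
qed

lemma norm_mellin_times_blaschke_le:
  assumes fin: "finite F" and lam: "\<And>k. k \<in> F \<Longrightarrow> 0 \<le> lam k"
    and bound: "\<And>s. s \<in> {0..1} \<Longrightarrow> \<bar>muntz_poly F lam a s\<bar> \<le> m"
    and "Re z \<le> 0"
  shows "norm (mellin_times_blaschke F lam a z) \<le> m"
proof (rule maximum_modulus_left_halfplane[OF _ _ _ _ \<open>Re z \<le> 0\<close>])
  have holo: "mellin_times_blaschke F lam a holomorphic_on {w. Re w \<le> 0}"
    by (rule holomorphic_on_subset[OF holomorphic_mellin_times_blaschke[OF fin lam]]) auto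
  then show "mellin_times_blaschke F lam a holomorphic_on {w. Re w < 0}"
    by (rule holomorphic_on_subset) auto
  show "continuous_on {w. Re w \<le> 0} (mellin_times_blaschke F lam a)"
    using holo by (rule holomorphic_on_imp_continuous_on)
  show "norm (mellin_times_blaschke F lam a (\<i> * of_real y)) \<le> m" for y
  proof -
    have "\<i> * of_real y + of_real (lam k + 1) \<noteq> 0" if "k \<in> F" for k
      using lam[OF that] by (auto simp: complex_eq_iff)
    then show ?thesis
      using norm_mellin_times_blaschke_le_norm_mellin[OF fin lam, where w = "\<i> * of_real y"]
        norm_mellin_muntz_poly_imaginary_le[OF fin lam bound] order_trans by fastforce
  qed
qed (rule mellin_times_blaschke_vanishes_at_infinity[OF fin lam])

section \<open>Growth of the Mellin transform in a wedge\<close>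

definition wedge :: "real \<Rightarrow> complex set" where
  "wedge \<sigma> = {w. Re w \<le> -(1 + \<sigma>) \<and> -(1 + \<sigma>) - Re w \<le> \<bar>Im w\<bar>}"

lemma wedge_norm_add_lower_bound:
  fixes z :: complex
  assumes l: "0 < l" "l \<le> lam" and z: "z \<in> wedge (l/2)"
  shows "lam\<^sup>2 / 8 \<le> (norm (z + of_real (lam + 1)))\<^sup>2"
proof -
  define w where "w = -(1 + l/2) - Re z"
  have "0 \<le> w" "w\<^sup>2 \<le> (Im z)\<^sup>2"
    using z unfolding w_def wedge_def by (auto intro: abs_le_square_iff[THEN iffD1] simp: abs_of_nonneg)
  have "(lam - l/2)\<^sup>2 / 2 \<le> (lam - l/2 - w)\<^sup>2 + w\<^sup>2"
    using zero_le_power2[of "lam - l/2 - 2*w"] by (simp add: power2_eq_square field_simps)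
  moreover have "(lam/2)\<^sup>2 \<le> (lam - l/2)\<^sup>2"
    using l by (intro power_mono) auto
  moreover have "(norm (z + of_real (lam + 1)))\<^sup>2 = (lam - l/2 - w)\<^sup>2 + (Im z)\<^sup>2"
    unfolding cmod_power2 w_def by (simp add: algebra_simps)
  ultimately show ?thesis
    using \<open>w\<^sup>2 \<le> (Im z)\<^sup>2\<close> by (simp add: power2_eq_square)
qed

lemma wedge_norm_diff_le:
  fixes z :: complex
  assumes l: "0 < l" "l \<le> lam" and z: "z \<in> wedge (l/2)"
  shows "norm (z - of_real (lam + 1)) \<le> exp (16 * (1 + 1/l) * (- Re z) / lam) * norm (z + of_real (lam + 1))"
proof -
  define X where "X = 32 * (1 + 1/l) * (- Re z) / lam"
  have "0 \<le> X"
    using l z unfolding X_def wedge_def by (intro divide_nonneg_pos mult_nonneg_nonneg) auto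
  have "lam + 1 \<le> (1 + 1/l) * lam"
    using l by (simp add: algebra_simps)
  then have "4 * (- Re z) * (lam + 1) \<le> X * (lam\<^sup>2 / 8)"
    using l z unfolding X_def wedge_def by (simp add: power2_eq_square field_simps mult_left_mono)
  also have "\<dots> \<le> X * (norm (z + of_real (lam + 1)))\<^sup>2"
    using wedge_norm_add_lower_bound[OF l z] \<open>0 \<le> X\<close> by (rule mult_left_mono)
  finally have "(norm (z - of_real (lam + 1)))\<^sup>2 \<le> (1 + X) * (norm (z + of_real (lam + 1)))\<^sup>2"
    unfolding cmod_power2 by (simp add: power2_eq_square algebra_simps)
  also have "\<dots> \<le> exp X * (norm (z + of_real (lam + 1)))\<^sup>2"
    by (intro mult_right_mono exp_ge_add_one_self) simp
  also have "\<dots> = (exp (X/2) * norm (z + of_real (lam + 1)))\<^sup>2"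
    by (simp add: power_mult_distrib exp_double[symmetric])
  finally have "norm (z - of_real (lam + 1)) \<le> exp (X/2) * norm (z + of_real (lam + 1))"
    by (rule power2_le_imp_le) simp
  moreover have "X/2 = 16 * (1 + 1/l) * (- Re z) / lam"
    using l unfolding X_def by (simp add: field_simps)
  ultimately show ?thesis
    by simp
qed

text \<open>This is where the Muntz condition \<open>(\<Sum>k\<in>F. 1 / lam k) \<le> S\<close> enters.\<close>
lemma norm_blaschke_wedge_lower_bound:
  assumes fin: "finite F" and l: "0 < l" "\<And>k. k \<in> F \<Longrightarrow> l \<le> lam k"
    and S: "(\<Sum>k\<in>F. 1 / lam k) \<le> S"
    and z: "z \<in> wedge (l/2)"
  shows "1 \<le> exp (16 * (1 + 1/l) * S * (- Re z)) * norm (blaschke F lam z)"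
proof -
  define E where "E k = 16 * (1 + 1/l) * (- Re z) / lam k" for k
  have "exp (- E k) \<le> norm ((z + of_real (lam k + 1)) / (z - of_real (lam k + 1)))" if k: "k \<in> F" for k
  proof -
    have "0 < norm (z - of_real (lam k + 1))"
      using z l(1) l(2)[OF k] by (auto simp: complex_eq_iff wedge_def)
    with wedge_norm_diff_le[OF l(1) l(2)[OF k] z] show ?thesis
      unfolding E_def norm_divide by (simp add: exp_minus field_simps)
  qed
  then have "exp (- (\<Sum>k\<in>F. E k)) \<le> norm (blaschke F lam z)"
    unfolding blaschke_def prod_norm[symmetric] sum_negf[symmetric] exp_sum[OF fin]
    by (intro prod_mono) auto
  then have "1 \<le> exp (\<Sum>k\<in>F. E k) * norm (blaschke F lam z)"
    by (simp add: exp_minus field_simps)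
  moreover have "(\<Sum>k\<in>F. E k) \<le> 16 * (1 + 1/l) * S * (- Re z)"
  proof -
    have "(\<Sum>k\<in>F. E k) = 16 * (1 + 1/l) * (- Re z) * (\<Sum>k\<in>F. 1 / lam k)"
      unfolding E_def sum_distrib_left by simp
    also have "\<dots> \<le> 16 * (1 + 1/l) * (- Re z) * S"
    proof (rule mult_left_mono[OF S])
      show "0 \<le> 16 * (1 + 1/l) * (- Re z)"
        using l(1) z unfolding wedge_def by (intro mult_nonneg_nonneg) auto
    qed
    finally show ?thesis
      by (simp add: mult_ac)
  qed
  ultimately show ?thesis
    by (meson exp_le_cancel_iff mult_right_mono norm_ge_zero order_trans)
qed

lemma norm_mellin_muntz_poly_wedge_le:
  assumes fin: "finite F" and l: "0 < l" "\<And>k. k \<in> F \<Longrightarrow> l \<le> lam k"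
    and bound: "\<And>s. s \<in> {0..1} \<Longrightarrow> \<bar>muntz_poly F lam a s\<bar> \<le> m"
    and S: "(\<Sum>k\<in>F. 1 / lam k) \<le> S"
    and z: "z \<in> wedge (l/2)"
  shows "norm (mellin_muntz_poly F lam a z) \<le> m * exp (16 * (1 + 1/l) * S * (- Re z))"
proof -
  have lam: "0 \<le> lam k" if "k \<in> F" for k
    using l that by force
  have "z + of_real (lam k + 1) \<noteq> 0" if k: "k \<in> F" for k
    using wedge_norm_add_lower_bound[OF l(1) l(2)[OF k] z] l(2)[OF k] l(1) by auto
  then have "mellin_times_blaschke F lam a z = mellin_muntz_poly F lam a z * blaschke F lam z"
    by (rule mellin_times_blaschke_eq[OF fin])
  moreover have "Re z \<le> 0"
    using z l(1) unfolding wedge_def by simp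
  then have "norm (mellin_times_blaschke F lam a z) \<le> m"
    by (intro norm_mellin_times_blaschke_le[OF fin _ bound]) (use lam in blast)
  ultimately have "norm (mellin_muntz_poly F lam a z) * norm (blaschke F lam z) \<le> m"
    by (simp add: norm_mult)
  have "norm (mellin_muntz_poly F lam a z) \<le>
      norm (mellin_muntz_poly F lam a z) * (exp (16 * (1 + 1/l) * S * (- Re z)) * norm (blaschke F lam z))"
    using norm_blaschke_wedge_lower_bound[OF fin l S z] by (simp add: mult_le_cancel_left1)
  also have "\<dots> = exp (16 * (1 + 1/l) * S * (- Re z)) * (norm (mellin_muntz_poly F lam a z) * norm (blaschke F lam z))"
    by (simp add: mult_ac)
  also have "\<dots> \<le> exp (16 * (1 + 1/l) * S * (- Re z)) * m"
    using \<open>norm (mellin_muntz_poly F lam a z) * norm (blaschke F lam z) \<le> m\<close> by simp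
  finally show ?thesis
    by (simp add: mult.commute)
qed

section \<open>Recovering a Muntz polynomial from its Mellin transform\<close>

definition triangle_contour :: "real \<Rightarrow> real \<Rightarrow> real \<Rightarrow> complex" where
  "triangle_contour \<sigma> X =
     linepath (Complex (-(1 + \<sigma>)) 0) (Complex (-(1 + \<sigma> + X)) X) +++
     linepath (Complex (-(1 + \<sigma> + X)) X) (Complex (-(1 + \<sigma> + X)) (-X)) +++
     linepath (Complex (-(1 + \<sigma> + X)) (-X)) (Complex (-(1 + \<sigma>)) 0)"

lemma in_interior_triangle:
  assumes "0 < X" and "\<sigma> < r" and "r < \<sigma> + X"
  shows "Complex (-(1 + r)) 0 \<in> interior (convex hull
           {Complex (-(1 + \<sigma>)) 0, Complex (-(1 + \<sigma> + X)) X, Complex (-(1 + \<sigma> + X)) (-X)})"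
proof -
  define \<theta> where "\<theta> = (r - \<sigma>) / X"
  have \<theta>: "0 < \<theta>" "\<theta> < 1" "\<theta> * X = r - \<sigma>"
    using assms by (auto simp: \<theta>_def field_simps)
  have noncollinear:
    "\<not> collinear {Complex (-(1 + \<sigma>)) 0, Complex (-(1 + \<sigma> + X)) X, Complex (-(1 + \<sigma> + X)) (-X)}"
    using assms(1) by (simp add: collinear_3 collinear_iff_Reals complex_is_Real_iff Im_divide)
  show ?thesis
    unfolding interior_convex_hull_3_minimal[OF noncollinear DIM_complex]
    using \<theta> by (intro CollectI exI[of _ "1 - \<theta>"] exI[of _ "\<theta>/2"])
                 (auto simp: complex_eq_iff algebra_simps)
qed

lemma has_contour_integral_triangle_pole:
  assumes holo: "f holomorphic_on UNIV" and "0 < X" and "\<sigma> < r" and "r < \<sigma> + X"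
  shows "((\<lambda>w. f w / (w + of_real (r + 1))) has_contour_integral
           (2 * pi * \<i> * f (- of_real (r + 1)))) (triangle_contour \<sigma> X)"
proof -
  define p where "p = Complex (-(1 + r)) 0"
  have p_eq: "p = - of_real (r + 1)"
    by (simp add: p_def complex_eq_iff)
  have p: "p \<in> interior (convex hull
      {Complex (-(1 + \<sigma>)) 0, Complex (-(1 + \<sigma> + X)) X, Complex (-(1 + \<sigma> + X)) (-X)})"
    unfolding p_def using assms(2-4) by (rule in_interior_triangle)
  have "winding_number (triangle_contour \<sigma> X) p = 1"
    unfolding triangle_contour_def using winding_number_triangle[OF p] assms(2,3)
    by (simp add: p_def algebra_simps)
  moreover have "p \<notin> path_image (triangle_contour \<sigma> X)"
    using p unfolding interior_of_triangle[OF DIM_complex]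
    by (simp add: triangle_contour_def path_image_join)
  then have "((\<lambda>w. f w / (w - p)) has_contour_integral
      (2 * pi * \<i> * winding_number (triangle_contour \<sigma> X) p * f p)) (triangle_contour \<sigma> X)"
    by (intro Cauchy_integral_formula_convex_simple[where S = UNIV] holo)
       (auto simp: triangle_contour_def valid_path_join)
  ultimately show ?thesis
    unfolding p_eq diff_minus_eq_add by simp
qed

lemma has_contour_integral_inverse_mellin_triangle:
  assumes "finite F" and "\<And>k. k \<in> F \<Longrightarrow> \<sigma> < lam k \<and> lam k < \<sigma> + X"
    and "0 < X" and "0 < t"
  shows "((\<lambda>w. mellin_muntz_poly F lam a w * of_real t powr (- w - 1)) has_contour_integral
           (2 * pi * \<i> * of_real (muntz_poly F lam a t))) (triangle_contour \<sigma> X)"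
proof -
  have "((\<lambda>w. \<Sum>k\<in>F. of_real (a k) * (of_real t powr (- w - 1) / (w + of_real (lam k + 1))))
      has_contour_integral (\<Sum>k\<in>F. of_real (a k) *
         (2 * pi * \<i> * of_real t powr (- (- of_real (lam k + 1)) - 1)))) (triangle_contour \<sigma> X)"
    using assms(1,2,3)
    by (intro has_contour_integral_sum has_contour_integral_lmul has_contour_integral_triangle_pole)
       (auto intro!: holomorphic_intros)
  moreover have "- (- of_real (lam k + 1)) - 1 = (of_real (lam k) :: complex)" for k
    by simp
  ultimately show ?thesis
    using assms(4)
    by (simp add: mellin_muntz_poly_def muntz_poly_def sum_distrib_left sum_distrib_right
                  powr_of_real mult_ac)
qed

lemma has_integral_exp_neg_mult_01:
  fixes c :: real
  assumes "0 < c"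
  shows "((\<lambda>u. exp (- c * u)) has_integral (1 - exp (- c)) / c) {0..1}"
proof -
  have "((\<lambda>u. exp (- c * u)) has_integral (- exp (- c * 1) / c - - exp (- c * 0) / c)) {0..1}"
    using assms
    by (intro fundamental_theorem_of_calculus)
       (auto intro!: derivative_eq_intros simp: has_real_derivative_iff_has_vector_derivative[symmetric])
  then show ?thesis
    by (simp add: diff_divide_distrib)
qed

lemma norm_contour_integral_linepath_exp_le:
  assumes "continuous_on (closed_segment a b) f" and "0 < c" and "0 \<le> K"
    and "\<And>u. u \<in> {0..1} \<Longrightarrow> norm (f (linepath a b u) * (b - a)) \<le> K * exp (- c * u)"
  shows "norm (contour_integral (linepath a b) f) \<le> K / c"
proof -
  have integral:
    "((\<lambda>u. f (linepath a b u) * (b - a)) has_integral contour_integral (linepath a b) f) {0..1}"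
    using assms(1) has_contour_integral_linepath has_contour_integral_integral
      contour_integrable_continuous_linepath by blast
  have majorant: "((\<lambda>u. K * exp (- c * u)) has_integral K * ((1 - exp (- c)) / c)) {0..1}"
    using assms(2) by (intro has_integral_mult_right has_integral_exp_neg_mult_01)
  have "norm (contour_integral (linepath a b) f) \<le> K * ((1 - exp (- c)) / c)"
    using integral_norm_bound_integral[OF has_integral_integrable[OF integral]
        has_integral_integrable[OF majorant] assms(4)]
    unfolding integral_unique[OF integral] integral_unique[OF majorant] .
  also have "\<dots> \<le> K * (1 / c)"
    using assms(2,3) by (intro mult_left_mono divide_right_mono) auto
  finally show ?thesis
    by simp
qed

lemma continuous_on_powr_kernel: "continuous_on S (\<lambda>w::complex. of_real t powr (- w - 1))"
  by (intro holomorphic_on_imp_continuous_on holomorphic_intros)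

lemma slant_side_in_wedge:
  assumes "\<bar>s\<bar> = 1" and "0 \<le> X" and "u \<in> {0..1}"
  shows "linepath (Complex (-(1 + \<sigma>)) 0) (Complex (-(1 + \<sigma> + X)) (s * X)) u \<in> wedge \<sigma>"
    and "Re (linepath (Complex (-(1 + \<sigma>)) 0) (Complex (-(1 + \<sigma> + X)) (s * X)) u) = -(1 + \<sigma>) - u * X"
proof -
  show "Re (linepath (Complex (-(1 + \<sigma>)) 0) (Complex (-(1 + \<sigma> + X)) (s * X)) u) = -(1 + \<sigma>) - u * X"
    by (simp add: linepath_def algebra_simps)
  moreover have "\<bar>Im (linepath (Complex (-(1 + \<sigma>)) 0) (Complex (-(1 + \<sigma> + X)) (s * X)) u)\<bar> = u * X"
    using assms by (simp add: linepath_def abs_mult)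
  ultimately show "linepath (Complex (-(1 + \<sigma>)) 0) (Complex (-(1 + \<sigma> + X)) (s * X)) u \<in> wedge \<sigma>"
    using assms by (simp add: wedge_def)
qed

lemma slant_side_subset_wedge:
  assumes "\<bar>s\<bar> = 1" and "0 \<le> X"
  shows "closed_segment (Complex (-(1 + \<sigma>)) 0) (Complex (-(1 + \<sigma> + X)) (s * X)) \<subseteq> wedge \<sigma>"
  using slant_side_in_wedge(1)[OF assms]
  by (auto simp: path_image_linepath[symmetric] path_image_def simp del: path_image_linepath)

lemma norm_slant_side_integrand_le:
  fixes Q :: "complex \<Rightarrow> complex"
  assumes s: "\<bar>s\<bar> = 1" and "0 \<le> X" and "0 < t" and "u \<in> {0..1}"
    and bound: "\<And>w. w \<in> wedge \<sigma> \<Longrightarrow> norm (Q w) \<le> m * exp (D * (- Re w))"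
  defines "a \<equiv> Complex (-(1 + \<sigma>)) 0" and "b \<equiv> Complex (-(1 + \<sigma> + X)) (s * X)"
  shows "norm (Q (linepath a b u) * of_real t powr (- linepath a b u - 1) * (b - a))
           \<le> sqrt 2 * X * m * exp (D * (1 + \<sigma>)) * t powr \<sigma> * exp ((D + ln t) * X * u)"
proof -
  define w where "w = linepath a b u"
  have w: "w \<in> wedge \<sigma>" "Re w = -(1 + \<sigma>) - u * X"
    using slant_side_in_wedge[OF s \<open>0 \<le> X\<close> \<open>u \<in> {0..1}\<close>] by (simp_all add: w_def a_def b_def)
  have "norm (Q w) \<le> m * exp (D * (1 + \<sigma> + u * X))"
    using bound[OF w(1)] w(2) by (simp add: algebra_simps)
  moreover have kernel: "norm (of_real t powr (- w - 1)) = exp ((\<sigma> + u * X) * ln t)"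
    using \<open>0 < t\<close> w(2) by (simp add: norm_powr_real_powr powr_def)
  moreover have length: "norm (b - a) = sqrt 2 * X"
  proof -
    have "s\<^sup>2 = 1"
      using s by (metis power2_abs one_power2)
    then have "norm (b - a) = sqrt (2 * X\<^sup>2)"
      by (simp add: a_def b_def cmod_def power_mult_distrib)
    then show ?thesis
      using \<open>0 \<le> X\<close> by (simp add: real_sqrt_mult)
  qed
  ultimately have "norm (Q w * of_real t powr (- w - 1) * (b - a))
      \<le> m * exp (D * (1 + \<sigma> + u * X)) * exp ((\<sigma> + u * X) * ln t) * (sqrt 2 * X)"
    using \<open>0 \<le> X\<close> unfolding norm_mult kernel length by (intro mult_right_mono) auto
  also have "\<dots> = sqrt 2 * X * m * exp (D * (1 + \<sigma>)) * t powr \<sigma> * exp ((D + ln t) * X * u)"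
    using \<open>0 < t\<close> by (simp add: powr_def algebra_simps flip: exp_add)
  finally show ?thesis
    by (simp add: w_def)
qed

text \<open>Along a slanted side the growth \<open>exp (D * (- Re w))\<close> of \<open>Q\<close> is beaten by the decay
  \<open>t powr (- Re w - 1)\<close> of the kernel once \<open>ln t \<le> - 2 * D\<close>, so the bound does not depend
  on the size \<open>X\<close> of the triangle.\<close>
lemma norm_contour_integral_slant_side_le:
  fixes Q :: "complex \<Rightarrow> complex"
  assumes s: "\<bar>s\<bar> = 1" and X: "0 < X" and t: "0 < t" and D: "0 < D" "ln t \<le> - 2 * D"
    and cont: "continuous_on (wedge \<sigma>) Q"
    and bound: "\<And>w. w \<in> wedge \<sigma> \<Longrightarrow> norm (Q w) \<le> m * exp (D * (- Re w))"
  defines "a \<equiv> Complex (-(1 + \<sigma>)) 0" and "b \<equiv> Complex (-(1 + \<sigma> + X)) (s * X)"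
  shows "norm (contour_integral (linepath a b) (\<lambda>w. Q w * of_real t powr (- w - 1)))
           \<le> sqrt 2 * m * exp (D * (1 + \<sigma>)) * t powr \<sigma> / D"
    and "norm (contour_integral (linepath b a) (\<lambda>w. Q w * of_real t powr (- w - 1)))
           \<le> sqrt 2 * m * exp (D * (1 + \<sigma>)) * t powr \<sigma> / D"
proof -
  define K where "K = sqrt 2 * X * m * exp (D * (1 + \<sigma>)) * t powr \<sigma>"
  define c where "c = - (D + ln t) * X"
  have "D * X \<le> c"
    using D X by (simp add: c_def mult_right_mono)
  moreover have "0 < D * X"
    using D X by simp
  ultimately have "0 < c"
    by linarith
  have "a \<in> wedge \<sigma>"
    by (simp add: a_def wedge_def)
  then have "0 \<le> m * exp (D * (- Re a))"
    using bound norm_ge_zero order_trans by blast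
  then have "0 \<le> K"
    using X by (simp add: K_def zero_le_mult_iff)
  have cont_f: "continuous_on (closed_segment a b) (\<lambda>w. Q w * of_real t powr (- w - 1))"
    using slant_side_subset_wedge[OF s less_imp_le[OF X]] unfolding a_def b_def
    by (intro continuous_on_mult continuous_on_subset[OF cont] continuous_on_powr_kernel)
  have "norm (contour_integral (linepath a b) (\<lambda>w. Q w * of_real t powr (- w - 1))) \<le> K / c"
  proof (rule norm_contour_integral_linepath_exp_le[OF cont_f \<open>0 < c\<close> \<open>0 \<le> K\<close>])
    fix u :: real assume "u \<in> {0..1}"
    have "sqrt 2 * X * m * exp (D * (1 + \<sigma>)) * t powr \<sigma> * exp ((D + ln t) * X * u) = K * exp (- c * u)"
      by (simp add: K_def c_def algebra_simps)
    with norm_slant_side_integrand_le[where \<sigma> = \<sigma> and Q = Q, OF s less_imp_le[OF X] t \<open>u \<in> {0..1}\<close> bound]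
    show "norm (Q (linepath a b u) * of_real t powr (- linepath a b u - 1) * (b - a)) \<le> K * exp (- c * u)"
      by (simp only: a_def b_def)
  qed
  also have "\<dots> \<le> K / (D * X)"
    using \<open>0 \<le> K\<close> \<open>D * X \<le> c\<close> \<open>0 < D * X\<close> by (intro divide_left_mono) auto
  finally have "norm (contour_integral (linepath a b) (\<lambda>w. Q w * of_real t powr (- w - 1)))
      \<le> sqrt 2 * m * exp (D * (1 + \<sigma>)) * t powr \<sigma> / D"
    using X by (simp add: K_def)
  moreover have "contour_integral (linepath b a) (\<lambda>w. Q w * of_real t powr (- w - 1))
      = - contour_integral (linepath a b) (\<lambda>w. Q w * of_real t powr (- w - 1))"
    using contour_integral_reverse_linepath[OF cont_f] by simp
  ultimately show "norm (contour_integral (linepath a b) (\<lambda>w. Q w * of_real t powr (- w - 1)))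
           \<le> sqrt 2 * m * exp (D * (1 + \<sigma>)) * t powr \<sigma> / D"
    and "norm (contour_integral (linepath b a) (\<lambda>w. Q w * of_real t powr (- w - 1)))
           \<le> sqrt 2 * m * exp (D * (1 + \<sigma>)) * t powr \<sigma> / D"
    by simp_all
qed

lemma norm_contour_integral_left_side_le:
  fixes Q :: "complex \<Rightarrow> complex"
  assumes "0 \<le> X" and "0 \<le> \<sigma>" and t: "0 < t" "t \<le> 1"
    and cont: "continuous_on {w. Re w = -(1 + \<sigma> + X)} Q"
    and bound: "\<And>w. Re w = -(1 + \<sigma> + X) \<Longrightarrow> norm (Q w) \<le> A"
  defines "p \<equiv> Complex (-(1 + \<sigma> + X)) X" and "q \<equiv> Complex (-(1 + \<sigma> + X)) (-X)"
  shows "norm (contour_integral (linepath p q) (\<lambda>w. Q w * of_real t powr (- w - 1))) \<le> 2 * A * X * t powr X"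
proof -
  have Re: "Re w = -(1 + \<sigma> + X)" if "w \<in> closed_segment p q" for w
    using that unfolding path_image_linepath[symmetric] path_image_def
    by (auto simp: p_def q_def linepath_def algebra_simps)
  then have "continuous_on (closed_segment p q) (\<lambda>w. Q w * of_real t powr (- w - 1))"
    by (intro continuous_on_mult continuous_on_subset[OF cont] continuous_on_powr_kernel) auto
  then have "((\<lambda>w. Q w * of_real t powr (- w - 1)) has_contour_integral
      contour_integral (linepath p q) (\<lambda>w. Q w * of_real t powr (- w - 1))) (linepath p q)"
    by (intro has_contour_integral_integral contour_integrable_continuous_linepath)
  then have "norm (contour_integral (linepath p q) (\<lambda>w. Q w * of_real t powr (- w - 1)))
      \<le> (A * t powr X) * norm (q - p)"
  proof (rule has_contour_integral_bound_linepath)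
    have "Re p = -(1 + \<sigma> + X)"
      by (simp add: p_def)
    then have "0 \<le> A"
      using order_trans[OF norm_ge_zero bound] by blast
    then show "0 \<le> A * t powr X"
      by simp
    fix w assume w: "w \<in> closed_segment p q"
    have "norm (of_real t powr (- w - 1)) = t powr \<sigma> * t powr X"
      using t Re[OF w] by (simp add: norm_powr_real_powr powr_add[symmetric] add.commute)
    also have "\<dots> \<le> t powr X"
      using t \<open>0 \<le> \<sigma>\<close> by (intro mult_left_le_one_le powr_le1) auto
    finally show "norm (Q w * of_real t powr (- w - 1)) \<le> A * t powr X"
      using bound[OF Re[OF w]] \<open>0 \<le> A\<close> unfolding norm_mult by (intro mult_mono) auto
  qed
  moreover have "norm (q - p) = 2 * X"
    using \<open>0 \<le> X\<close> by (simp add: p_def q_def cmod_def real_sqrt_mult)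
  ultimately show ?thesis
    by (simp add: mult_ac)
qed

lemma norm_triangle_contour_integral_le:
  fixes Q :: "complex \<Rightarrow> complex"
  assumes integral: "((\<lambda>w. Q w * of_real t powr (- w - 1)) has_contour_integral I) (triangle_contour \<sigma> X)"
    and X: "0 < X" and "0 \<le> \<sigma>" and t: "0 < t" and D: "0 < D" "ln t \<le> - 2 * D"
    and cont_wedge: "continuous_on (wedge \<sigma>) Q"
    and bound_wedge: "\<And>w. w \<in> wedge \<sigma> \<Longrightarrow> norm (Q w) \<le> m * exp (D * (- Re w))"
    and cont_left: "continuous_on {w. Re w = -(1 + \<sigma> + X)} Q"
    and bound_left: "\<And>w. Re w = -(1 + \<sigma> + X) \<Longrightarrow> norm (Q w) \<le> A"
  shows "norm I \<le> 2 * (sqrt 2 * m * exp (D * (1 + \<sigma>)) * t powr \<sigma> / D) + 2 * A * X * t powr X"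
proof -
  define f where "f w = Q w * of_real t powr (- w - 1)" for w
  define apex where "apex = Complex (-(1 + \<sigma>)) 0"
  define upper where "upper = Complex (-(1 + \<sigma> + X)) (1 * X)"
  define lower where "lower = Complex (-(1 + \<sigma> + X)) (-1 * X)"
  define B where "B = sqrt 2 * m * exp (D * (1 + \<sigma>)) * t powr \<sigma> / D"
  have "ln t \<le> 0"
    using D by linarith
  then have "t \<le> 1"
    using t by simp
  have sides: "contour_integral (linepath apex upper) f + contour_integral (linepath upper lower) f +
        contour_integral (linepath lower apex) f = I"
    using integral unfolding triangle_contour_def
    by (intro has_chain_integral_chain_integral3) (simp add: f_def[abs_def] apex_def upper_def lower_def)
  have "norm I \<le> norm (contour_integral (linepath apex upper) f) +
      norm (contour_integral (linepath upper lower) f) + norm (contour_integral (linepath lower apex) f)"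
    unfolding sides[symmetric] by (rule order_trans[OF norm_triangle_ineq add_right_mono[OF norm_triangle_ineq]])
  moreover have "norm (contour_integral (linepath apex upper) f) \<le> B"
    using norm_contour_integral_slant_side_le(1)[of 1, OF _ X t D cont_wedge bound_wedge]
    by (simp add: B_def apex_def upper_def f_def[abs_def])
  moreover have "norm (contour_integral (linepath lower apex) f) \<le> B"
    using norm_contour_integral_slant_side_le(2)[of "-1", OF _ X t D cont_wedge bound_wedge]
    by (simp add: B_def apex_def lower_def f_def[abs_def])
  moreover have "norm (contour_integral (linepath upper lower) f) \<le> 2 * A * X * t powr X"
    using norm_contour_integral_left_side_le[OF less_imp_le[OF X] \<open>0 \<le> \<sigma>\<close> t \<open>t \<le> 1\<close> cont_left bound_left]
    by (simp add: upper_def lower_def f_def[abs_def])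
  ultimately show ?thesis
    unfolding B_def[symmetric] by linarith
qed

lemma continuous_on_mellin_muntz_poly:
  assumes "finite F" and "\<And>w k. w \<in> T \<Longrightarrow> k \<in> F \<Longrightarrow> w + of_real (lam k + 1) \<noteq> 0"
  shows "continuous_on T (mellin_muntz_poly F lam a)"
  unfolding mellin_muntz_poly_def using assms by (intro continuous_intros) auto

lemma wedge_avoids_pole:
  assumes "w \<in> wedge \<sigma>" and "\<sigma> < lam"
  shows "w + of_real (lam + 1) \<noteq> 0"
  using assms by (auto simp: wedge_def complex_eq_iff)

lemma left_line_far_from_poles:
  assumes "Re w = -(1 + \<sigma> + X)" and "0 \<le> \<sigma>" and "lam + 1 \<le> X"
  shows "1 \<le> norm (w + of_real (lam + 1))"
  using assms abs_Re_le_cmod[of "w + of_real (lam + 1)"] by simp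

lemma muntz_poly_triangle_bound:
  assumes fin: "finite F" and l: "0 < l" "\<And>k. k \<in> F \<Longrightarrow> l \<le> lam k"
    and bound: "\<And>s. s \<in> {0..1} \<Longrightarrow> \<bar>muntz_poly F lam a s\<bar> \<le> m"
    and S: "(\<Sum>k\<in>F. 1 / lam k) \<le> S"
    and D: "D = 16 * (1 + 1/l) * S" "0 < D"
    and t: "0 < t" "ln t \<le> - 2 * D"
    and X: "0 < X" "\<And>k. k \<in> F \<Longrightarrow> lam k + 1 \<le> X"
  shows "\<bar>muntz_poly F lam a t\<bar> \<le>
           sqrt 2 * exp (D * (1 + l/2)) / (pi * D) * m * t powr (l/2) + (\<Sum>k\<in>F. \<bar>a k\<bar>) * X * t powr X / pi"
proof -
  have poles: "l/2 < lam k \<and> lam k < l/2 + X" if "k \<in> F" for k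
    using l X(2)[OF that] l(2)[OF that] by auto
  have far: "1 \<le> norm (w + of_real (lam k + 1))" if "Re w = -(1 + l/2 + X)" "k \<in> F" for w k
    using that(1) l(1) X(2)[OF that(2)] by (intro left_line_far_from_poles[where \<sigma> = "l/2"]) auto
  have integral: "((\<lambda>w. mellin_muntz_poly F lam a w * of_real t powr (- w - 1)) has_contour_integral
      2 * pi * \<i> * of_real (muntz_poly F lam a t)) (triangle_contour (l/2) X)"
    by (rule has_contour_integral_inverse_mellin_triangle[OF fin _ X(1) t(1)]) (use poles in blast)
  have cont_wedge: "continuous_on (wedge (l/2)) (mellin_muntz_poly F lam a)"
    using poles wedge_avoids_pole by (intro continuous_on_mellin_muntz_poly[OF fin]) blast
  have bound_wedge: "norm (mellin_muntz_poly F lam a w) \<le> m * exp (D * (- Re w))" if "w \<in> wedge (l/2)" for w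
    using norm_mellin_muntz_poly_wedge_le[OF fin l bound S that] by (simp add: D(1) mult_ac)
  have cont_left: "continuous_on {w. Re w = -(1 + l/2 + X)} (mellin_muntz_poly F lam a)"
    using far by (intro continuous_on_mellin_muntz_poly[OF fin]) fastforce
  have bound_left: "norm (mellin_muntz_poly F lam a w) \<le> (\<Sum>k\<in>F. \<bar>a k\<bar>)" if "Re w = -(1 + l/2 + X)" for w
    using norm_mellin_muntz_poly_le[OF fin _ far[OF that]] by simp
  have "0 \<le> l/2"
    using l(1) by simp
  from norm_triangle_contour_integral_le[OF integral X(1) this t(1) D(2) t(2)
      cont_wedge bound_wedge cont_left bound_left]
  have "pi * \<bar>muntz_poly F lam a t\<bar> \<le>
      sqrt 2 * m * exp (D * (1 + l/2)) * t powr (l/2) / D + (\<Sum>k\<in>F. \<bar>a k\<bar>) * X * t powr X"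
    by (simp add: norm_mult)
  then show ?thesis
    by (simp add: field_simps)
qed

lemma exists_nat_ge_with_small_mult_power:
  fixes t :: real
  assumes "0 \<le> t" and "t < 1" and "0 < e"
  obtains n where "C \<le> real n" and "real n * t ^ n < e"
proof -
  have "(\<lambda>n. real n * t ^ n) \<longlonglongrightarrow> 0"
    using assms by (intro powser_times_n_limit_0) simp
  then obtain N where N: "\<And>n. N \<le> n \<Longrightarrow> norm (real n * t ^ n - 0) < e"
    using LIMSEQ_D \<open>0 < e\<close> by blast
  show ?thesis
  proof (rule that)
    show "C \<le> real (max N (nat \<lceil>C\<rceil>))"
      by linarith
    show "real (max N (nat \<lceil>C\<rceil>)) * t ^ max N (nat \<lceil>C\<rceil>) < e"
      using N[of "max N (nat \<lceil>C\<rceil>)"] \<open>0 \<le> t\<close> by simp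
  qed
qed

lemma muntz_poly_near_zero_bound:
  assumes fin: "finite F" and l: "0 < l" "\<And>k. k \<in> F \<Longrightarrow> l \<le> lam k"
    and bound: "\<And>s. s \<in> {0..1} \<Longrightarrow> \<bar>muntz_poly F lam a s\<bar> \<le> m"
    and S: "(\<Sum>k\<in>F. 1 / lam k) \<le> S"
    and D: "D = 16 * (1 + 1/l) * S" "0 < D"
    and t: "0 < t" "ln t \<le> - 2 * D"
  shows "\<bar>muntz_poly F lam a t\<bar> \<le> sqrt 2 * exp (D * (1 + l/2)) / (pi * D) * m * t powr (l/2)"
proof (rule field_le_epsilon)
  fix e :: real assume "0 < e"
  define A where "A = (\<Sum>k\<in>F. \<bar>a k\<bar>)"
  have "0 \<le> A"
    by (simp add: A_def sum_nonneg)
  have "ln t < 0"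
    using t(2) D(2) by linarith
  then have "t < 1"
    using t(1) by simp
  moreover have "0 < pi * e / (A + 1)"
    using \<open>0 < e\<close> \<open>0 \<le> A\<close> by simp
  ultimately obtain n where n: "1 + (\<Sum>k\<in>F. lam k + 1) \<le> real n" "real n * t ^ n < pi * e / (A + 1)"
    using exists_nat_ge_with_small_mult_power less_imp_le[OF t(1)] by blast
  have lam: "0 \<le> lam k + 1" if "k \<in> F" for k
    using l(1) l(2)[OF that] by simp
  then have "0 \<le> (\<Sum>k\<in>F. lam k + 1)"
    by (intro sum_nonneg) auto
  then have "0 < real n"
    using n(1) by linarith
  have "lam k + 1 \<le> real n" if "k \<in> F" for k
  proof -
    have "lam k + 1 \<le> (\<Sum>k\<in>F. lam k + 1)"
      using fin that lam by (intro member_le_sum) auto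
    then show ?thesis
      using n(1) by linarith
  qed
  with \<open>0 < real n\<close> have "\<bar>muntz_poly F lam a t\<bar> \<le>
      sqrt 2 * exp (D * (1 + l/2)) / (pi * D) * m * t powr (l/2) + A * real n * t powr real n / pi"
    unfolding A_def by (intro muntz_poly_triangle_bound[OF fin l bound S D t])
  also have "A * real n * t powr real n / pi \<le> e"
  proof -
    have "A * (real n * t ^ n) \<le> A * (pi * e / (A + 1))"
      using n(2) \<open>0 \<le> A\<close> by (intro mult_left_mono) auto
    also have "\<dots> \<le> pi * e"
      using \<open>0 \<le> A\<close> \<open>0 < e\<close> by (simp add: field_simps)
    finally show ?thesis
      using t(1) by (simp add: powr_realpow field_simps)
  qed
  finally show "\<bar>muntz_poly F lam a t\<bar> \<le> sqrt 2 * exp (D * (1 + l/2)) / (pi * D) * m * t powr (l/2) + e"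
    by simp
qed

section \<open>Equicontinuity of the unit ball of a Muntz space at 0\<close>

lemma muntz_exponent_pos:
  assumes "strict_mono lam" and "lam 0 = 0" and "0 < i"
  shows "0 < lam i"
  using strict_monoD[OF assms(1,3)] assms(2) by simp

lemma muntz_constant_pos:
  fixes lam :: "nat \<Rightarrow> real"
  assumes "strict_mono lam" and "lam 0 = 0" and "summable (\<lambda>i. 1 / lam (Suc i))"
  shows "0 < 16 * (1 + 1 / lam 1) * (\<Sum>i. 1 / lam (Suc i))"
proof -
  have "0 < (\<Sum>i. 1 / lam (Suc i))"
    using muntz_exponent_pos[OF assms(1,2)] by (intro suminf_pos[OF assms(3)]) simp
  then show ?thesis
    using muntz_exponent_pos[OF assms(1,2), of 1] by (intro mult_pos_pos add_pos_pos) auto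
qed

lemma muntz_space_approx:
  assumes lam0: "lam 0 = 0" and lam_pos: "\<And>i. 0 < i \<Longrightarrow> 0 < lam i"
    and "y \<in> muntz_space lam" and "0 < e"
  obtains c0 n c where "\<And>s. s \<in> {0..1} \<Longrightarrow> \<bar>y s - (c0 + muntz_poly {1..<n} lam c s)\<bar> < e"
proof -
  obtain n c where approx: "\<And>s. s \<in> {0..1} \<Longrightarrow> \<bar>y s - (\<Sum>i<n. c i * mpow (lam i) s)\<bar> < e"
    using assms(3,4) unfolding muntz_space_def by blast
  have "(\<Sum>i<n. c i * mpow (lam i) s) = (if n = 0 then 0 else c 0) + muntz_poly {1..<n} lam c s" for s
  proof (cases n)
    case (Suc n')
    have "{..<n} = insert 0 {1..<n}"
      using Suc by auto
    moreover have "mpow (lam k) s = s powr lam k" if "k \<in> {1..<n}" for k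
      using lam_pos[of k] that by (simp add: mpow_def)
    ultimately show ?thesis
      using Suc lam0 by (simp add: muntz_poly_def mpow_def)
  qed (simp add: muntz_poly_def)
  then show ?thesis
    using approx that by metis
qed

lemma sum_inverse_le_suminf_Suc:
  fixes lam :: "nat \<Rightarrow> real"
  assumes "summable (\<lambda>i. 1 / lam (Suc i))" and "\<And>i. 0 < i \<Longrightarrow> 0 < lam i"
  shows "(\<Sum>k\<in>{1..<n}. 1 / lam k) \<le> (\<Sum>i. 1 / lam (Suc i))"
proof (cases n)
  case 0
  then show ?thesis
    using assms by (simp add: suminf_nonneg less_imp_le)
next
  case (Suc m)
  then have "(\<Sum>k\<in>{1..<n}. 1 / lam k) = (\<Sum>i\<in>{0..<m}. 1 / lam (Suc i))"
    using sum.shift_bounds_Suc_ivl[of "\<lambda>k. 1 / lam k" 0 m] by simp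
  also have "\<dots> \<le> (\<Sum>i. 1 / lam (Suc i))"
    using assms by (intro sum_le_suminf) (auto intro: less_imp_le)
  finally show ?thesis .
qed

lemma muntz_space_near_zero_bound:
  assumes mono: "strict_mono lam" and lam0: "lam 0 = 0" and summ: "summable (\<lambda>i. 1 / lam (Suc i))"
    and D: "D = 16 * (1 + 1 / lam 1) * (\<Sum>i. 1 / lam (Suc i))"
    and y: "y \<in> muntz_space lam" "\<And>s. s \<in> {0..1} \<Longrightarrow> \<bar>y s\<bar> \<le> 1"
    and t: "0 < t" "t \<le> exp (- 2 * D)"
  shows "\<bar>y t - y 0\<bar> \<le> 2 * (sqrt 2 * exp (D * (1 + lam 1 / 2)) / (pi * D)) * t powr (lam 1 / 2)"
proof (rule field_le_epsilon)
  fix e :: real assume "0 < e"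
  define K where "K = sqrt 2 * exp (D * (1 + lam 1 / 2)) / (pi * D)"
  have lam_pos: "0 < lam i" if "0 < i" for i
    using mono lam0 that by (rule muntz_exponent_pos)
  have "0 < D"
    unfolding D using mono lam0 summ by (rule muntz_constant_pos)
  then have "0 < 2 + 2 * K * t powr (lam 1 / 2)"
    by (simp add: K_def add_pos_nonneg)
  define e' where "e' = e / (2 + 2 * K * t powr (lam 1 / 2))"
  have "0 < e'"
    using \<open>0 < e\<close> \<open>0 < 2 + 2 * K * t powr (lam 1 / 2)\<close> by (simp add: e'_def)
  then obtain c0 n c where approx: "\<And>s. s \<in> {0..1} \<Longrightarrow> \<bar>y s - (c0 + muntz_poly {1..<n} lam c s)\<bar> < e'"
    using muntz_space_approx[OF lam0 lam_pos y(1)] by blast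
  have "muntz_poly {1..<n} lam c 0 = 0"
    using lam_pos by (simp add: muntz_poly_def)
  then have at_0: "\<bar>y 0 - c0\<bar> < e'"
    using approx[of 0] by simp
  have "\<bar>y 0\<bar> \<le> 1"
    using y(2) by simp
  then have "\<bar>muntz_poly {1..<n} lam c s\<bar> \<le> 2 + 2 * e'" if "s \<in> {0..1}" for s
    using approx[OF that] at_0 y(2)[OF that] by linarith
  moreover have "ln t \<le> - 2 * D"
    using t by (metis exp_gt_zero ln_exp ln_le_cancel_iff)
  ultimately have "\<bar>muntz_poly {1..<n} lam c t\<bar> \<le> K * (2 + 2 * e') * t powr (lam 1 / 2)"
    unfolding K_def using lam_pos[of 1] mono sum_inverse_le_suminf_Suc[OF summ lam_pos] D \<open>0 < D\<close> t(1)
    by (intro muntz_poly_near_zero_bound[where S = "\<Sum>i. 1 / lam (Suc i)"]) (auto simp: strict_mono_less_eq)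
  moreover have "t \<le> 1"
    using t(2) \<open>0 < D\<close> by (simp add: order_trans[OF _ exp_le_one_iff[THEN iffD2]])
  then have "\<bar>y t - (c0 + muntz_poly {1..<n} lam c t)\<bar> < e'"
    using approx t(1) by simp
  ultimately have "\<bar>y t - y 0\<bar> \<le> 2 * K * t powr (lam 1 / 2) + e' * (2 + 2 * K * t powr (lam 1 / 2))"
    using at_0 by (simp add: algebra_simps)
  also have "e' * (2 + 2 * K * t powr (lam 1 / 2)) = e"
    using \<open>0 < 2 + 2 * K * t powr (lam 1 / 2)\<close> by (simp add: e'_def)
  finally show "\<bar>y t - y 0\<bar> \<le> 2 * (sqrt 2 * exp (D * (1 + lam 1 / 2)) / (pi * D)) * t powr (lam 1 / 2) + e"
    by (simp add: K_def)
qed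

lemma muntz_space_unit_ball_equicontinuous_at_0:
  assumes mono: "strict_mono lam" and lam0: "lam 0 = 0" and summ: "summable (\<lambda>i. 1 / lam (Suc i))"
    and "0 < e"
  shows "\<exists>\<delta>>0. \<forall>y\<in>muntz_space lam. (\<forall>s\<in>{0..1}. \<bar>y s\<bar> \<le> 1) \<longrightarrow>
           (\<forall>t\<in>{0..1}. t < \<delta> \<longrightarrow> \<bar>y t - y 0\<bar> \<le> e)"
proof -
  define D where "D = 16 * (1 + 1 / lam 1) * (\<Sum>i. 1 / lam (Suc i))"
  define K where "K = 2 * (sqrt 2 * exp (D * (1 + lam 1 / 2)) / (pi * D))"
  define \<delta> where "\<delta> = min (exp (- 2 * D)) ((e / (K + 1)) powr (2 / lam 1))"
  have "0 < lam 1"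
    using mono lam0 by (rule muntz_exponent_pos) simp
  have "0 < D"
    unfolding D_def using mono lam0 summ by (rule muntz_constant_pos)
  then have "0 \<le> K"
    by (simp add: K_def)
  have "\<bar>y t - y 0\<bar> \<le> e"
    if "y \<in> muntz_space lam" "\<forall>s\<in>{0..1}. \<bar>y s\<bar> \<le> 1" "t \<in> {0..1}" "t < \<delta>" for y t
  proof (cases "t = 0")
    case False
    then have "\<bar>y t - y 0\<bar> \<le> K * t powr (lam 1 / 2)"
      unfolding K_def using that \<delta>_def
      by (intro muntz_space_near_zero_bound[OF mono lam0 summ D_def]) auto
    also have "\<dots> \<le> K * ((e / (K + 1)) powr (2 / lam 1)) powr (lam 1 / 2)"
      using that \<open>0 < lam 1\<close> \<open>0 \<le> K\<close> by (intro mult_left_mono powr_mono2) (auto simp: \<delta>_def)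
    also have "\<dots> = K * (e / (K + 1))"
      using \<open>0 < e\<close> \<open>0 \<le> K\<close> \<open>0 < lam 1\<close> by (simp add: powr_powr)
    also have "\<dots> \<le> e"
      using \<open>0 < e\<close> \<open>0 \<le> K\<close> by (simp add: field_simps)
    finally show ?thesis .
  qed (use \<open>0 < e\<close> in simp)
  moreover have "0 < \<delta>"
    using \<open>0 < e\<close> \<open>0 \<le> K\<close> by (simp add: \<delta>_def add_nonneg_pos)
  ultimately show ?thesis
    by blast
qed

lemma bdd_above_abs_continuous_01:
  fixes f :: "real \<Rightarrow> real"
  assumes "continuous_on {0..1} f"
  shows "bdd_above ((\<lambda>t. \<bar>f t\<bar>) ` {0..1})"
  using assms by (intro bounded_imp_bdd_above compact_imp_bounded compact_continuous_image continuous_intros) auto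

lemma abs_le_sup_norm01:
  assumes "continuous_on {0..1} f" and "t \<in> {0..1}"
  shows "\<bar>f t\<bar> \<le> sup_norm01 f"
  unfolding sup_norm01_def using assms by (intro cSUP_upper bdd_above_abs_continuous_01)

lemma less_sup_norm01_iff:
  assumes "continuous_on {0..1} f"
  shows "c < sup_norm01 f \<longleftrightarrow> (\<exists>t\<in>{0..1}. c < \<bar>f t\<bar>)"
  unfolding sup_norm01_def using assms by (intro less_cSUP_iff bdd_above_abs_continuous_01) auto

lemma not_locally_octahedral01_if_equicontinuous_at_peak:
  assumes cont: "\<And>y. y \<in> X \<Longrightarrow> continuous_on {0..1} y"
    and x: "x \<in> X" "sup_norm01 x = 1" "\<And>t. t \<in> {0..1} \<Longrightarrow> 0 \<le> x t"
    and peak: "\<And>\<delta>. 0 < \<delta> \<Longrightarrow> \<exists>\<eta>>0. \<forall>t\<in>{0..1}. 1 - \<eta> < x t \<longrightarrow> t < \<delta>"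
    and equicont: "\<And>e. 0 < e \<Longrightarrow>
      \<exists>\<delta>>0. \<forall>y\<in>X. (\<forall>s\<in>{0..1}. \<bar>y s\<bar> \<le> 1) \<longrightarrow> (\<forall>t\<in>{0..1}. t < \<delta> \<longrightarrow> \<bar>y t - y 0\<bar> \<le> e)"
  shows "\<not> locally_octahedral01 X"
proof
  assume octahedral: "locally_octahedral01 X"
  obtain \<delta> where "0 < \<delta>" and near_0:
      "\<And>y t. y \<in> X \<Longrightarrow> \<forall>s\<in>{0..1}. \<bar>y s\<bar> \<le> 1 \<Longrightarrow> t \<in> {0..1} \<Longrightarrow> t < \<delta> \<Longrightarrow>
        \<bar>y t - y 0\<bar> \<le> 1/2"
    using equicont[of "1/2"] by auto
  then obtain \<eta> where "0 < \<eta>" and peak_\<delta>: "\<And>t. t \<in> {0..1} \<Longrightarrow> 1 - \<eta> < x t \<Longrightarrow> t < \<delta>"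
    using peak by blast
  define \<epsilon> where "\<epsilon> = min \<eta> (1/4)"
  have "0 < \<epsilon>"
    using \<open>0 < \<eta>\<close> by (simp add: \<epsilon>_def)
  then obtain y where "y \<in> X" and "sup_norm01 y = 1"
    and plus: "2 - \<epsilon> < sup_norm01 (\<lambda>t. x t + y t)" and minus: "2 - \<epsilon> < sup_norm01 (\<lambda>t. x t - y t)"
    using octahedral x(1,2) unfolding locally_octahedral01_def by blast
  have unit: "\<forall>s\<in>{0..1}. \<bar>y s\<bar> \<le> 1" "\<forall>s\<in>{0..1}. \<bar>x s\<bar> \<le> 1"
    using abs_le_sup_norm01 cont \<open>y \<in> X\<close> \<open>sup_norm01 y = 1\<close> x(1,2) by metis+
  obtain t where t: "t \<in> {0..1}" "2 - \<epsilon> < \<bar>x t + y t\<bar>"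
    using plus cont[OF x(1)] cont[OF \<open>y \<in> X\<close>]
    by (subst (asm) less_sup_norm01_iff) (auto intro: continuous_intros)
  obtain s where s: "s \<in> {0..1}" "2 - \<epsilon> < \<bar>x s - y s\<bar>"
    using minus cont[OF x(1)] cont[OF \<open>y \<in> X\<close>]
    by (subst (asm) less_sup_norm01_iff) (auto intro: continuous_intros)
  have "\<bar>y t\<bar> \<le> 1" "\<bar>x t\<bar> \<le> 1" "\<bar>y s\<bar> \<le> 1" "\<bar>x s\<bar> \<le> 1" "0 \<le> x t" "0 \<le> x s"
    using unit x(3) t(1) s(1) by auto
  moreover have "\<epsilon> \<le> \<eta>" "\<epsilon> \<le> 1/4"
    by (simp_all add: \<epsilon>_def)
  ultimately have "1 - \<epsilon> < y t" "1 - \<eta> < x t" "y s < \<epsilon> - 1" "1 - \<eta> < x s"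
    using t(2) s(2) by linarith+
  moreover have "\<bar>y t - y 0\<bar> \<le> 1/2" "\<bar>y s - y 0\<bar> \<le> 1/2"
    using near_0[OF \<open>y \<in> X\<close> unit(1)] peak_\<delta> t(1) s(1) calculation by auto
  ultimately show False
    by (auto simp: \<epsilon>_def)
qed

lemma one_minus_powr_in_muntz_space:
  assumes "lam 0 = 0" and "0 < lam 1"
  shows "(\<lambda>t. 1 - t powr lam 1) \<in> muntz_space lam"
  unfolding muntz_space_def
proof (intro CollectI conjI allI impI)
  show "continuous_on {0..1} (\<lambda>t. 1 - t powr lam 1)"
    using assms(2) by (intro continuous_intros continuous_on_powr') auto
  fix e :: real assume "0 < e"
  then have "\<forall>t\<in>{0..1}. \<bar>(1 - t powr lam 1) - (\<Sum>i<2. (if i = 0 then 1 else -1) * mpow (lam i) t)\<bar> < e"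
    using assms by (simp add: mpow_def numeral_2_eq_2)
  then show "\<exists>n c. \<forall>t\<in>{0..1}. \<bar>(1 - t powr lam 1) - (\<Sum>i<n. c i * mpow (lam i) t)\<bar> < e"
    by (intro exI[of _ 2] exI[of _ "\<lambda>i::nat. if i = 0 then 1 else -1 :: real"])
qed

lemma sup_norm01_one_minus_powr:
  assumes "0 < a"
  shows "sup_norm01 (\<lambda>t. 1 - t powr a) = 1"
proof (rule antisym)
  show "sup_norm01 (\<lambda>t. 1 - t powr a) \<le> 1"
    unfolding sup_norm01_def
  proof (intro cSUP_least)
    fix t :: real assume "t \<in> {0..1}"
    then have "t powr a \<le> 1"
      using assms by (intro powr_le1) auto
    then show "\<bar>1 - t powr a\<bar> \<le> 1"
      by simp
  qed simp
  have "continuous_on {0..1} (\<lambda>t. 1 - t powr a)"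
    using assms by (intro continuous_intros continuous_on_powr') auto
  from abs_le_sup_norm01[OF this, of 0] show "1 \<le> sup_norm01 (\<lambda>t. 1 - t powr a)"
    by simp
qed

lemma one_minus_powr_near_1_only_near_0:
  fixes a \<delta> :: real
  assumes "0 < a" and "0 < \<delta>"
  shows "\<exists>\<eta>>0. \<forall>t\<in>{0..1}. 1 - \<eta> < 1 - t powr a \<longrightarrow> t < \<delta>"
proof (intro exI[of _ "\<delta> powr a"] conjI ballI impI)
  show "0 < \<delta> powr a"
    using assms(2) by simp
  fix t :: real assume "t \<in> {0..1}" and "1 - \<delta> powr a < 1 - t powr a"
  then show "t < \<delta>"
    using powr_mono2[of a \<delta> t] assms by force
qed

theorem mainTheorem3:
  fixes lam :: "nat \<Rightarrow> real"
  assumes "strict_mono lam"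
    and "\<And>i. lam i \<ge> 0"
    and "lam 0 = 0"
    and "summable (\<lambda>i. 1 / lam (Suc i))"
  shows "\<not> locally_octahedral01 (muntz_space lam)"
proof -
  have "0 < lam 1"
    using assms(1,3) by (rule muntz_exponent_pos) simp
  show ?thesis
  proof (rule not_locally_octahedral01_if_equicontinuous_at_peak)
    show "continuous_on {0..1} y" if "y \<in> muntz_space lam" for y
      using that by (simp add: muntz_space_def)
    show "(\<lambda>t. 1 - t powr lam 1) \<in> muntz_space lam"
      using assms(3) \<open>0 < lam 1\<close> by (rule one_minus_powr_in_muntz_space)
    show "sup_norm01 (\<lambda>t. 1 - t powr lam 1) = 1"
      using \<open>0 < lam 1\<close> by (rule sup_norm01_one_minus_powr)
    show "0 \<le> 1 - t powr lam 1" if "t \<in> {0..1}" for t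
      using that \<open>0 < lam 1\<close> by (simp add: powr_le1)
    show "\<exists>\<eta>>0. \<forall>t\<in>{0..1}. 1 - \<eta> < 1 - t powr lam 1 \<longrightarrow> t < \<delta>" if "0 < \<delta>" for \<delta>
      using \<open>0 < lam 1\<close> that by (rule one_minus_powr_near_1_only_near_0)
    show "\<exists>\<delta>>0. \<forall>y\<in>muntz_space lam. (\<forall>s\<in>{0..1}. \<bar>y s\<bar> \<le> 1) \<longrightarrow>
            (\<forall>t\<in>{0..1}. t < \<delta> \<longrightarrow> \<bar>y t - y 0\<bar> \<le> e)" if "0 < e" for e
      using assms(1,3,4) that by (rule muntz_space_unit_ball_equicontinuous_at_0)
  qed
qed

end
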